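(* Let $F=(f^{(1)},f^{(2)},\dots,f^{(j)},\dots)$ be a non-degenerate circular net with a family of spherical curvature lines, where $f^{(j)}$ lies on the sphere $s_j\in\mathbb{P}(\mathcal{L})$, the spheres $s_1,s_2,\dots$ are pairwise distinct, and their representatives are normalized by $\langle \mathfrak{s}_j,\mathfrak{p}\rangle=-1$ for all $j$. Let $\lambda_{12},\lambda_{23},\dots,\lambda_{j,j+1},\dots\in\mathbb{R}$ be arbitrary (folding parameters). Define $\sigma_{12}$ to be the inversion in $$\mathfrak{n}_{12}:=\mathfrak{s}_1+\lambda_{12}\mathfrak{s}_2-(1+\lambda_{12})\mathfrak{p},$$ and recursively, for $j\ge 2$, with $\Phi_j:=\sigma_{j-1,j}\circ\cdots\circ\sigma_{12}$, $\bar{\mathfrak{s}}_j:=\Phi_j(\mathfrak{s}_j)$ and $\hat{\mathfrak{s}}_{j+1}:=\Phi_j(\mathfrak{s}_{j+1})$, let $\sigma_{j,j+1}$ be the inversion in $$\mathfrak{n}_{j,j+1}:=\bar{\mathfrak{s}}_j+\lambda_{j,j+1}\hat{\mathfrak{s}}_{j+1}-(1+\lambda_{j,j+1})\mathfrak{p}.$$ Then the net $$\tilde F:=\big(f^{(1)},\ \sigma_{12}(f^{(2)}),\ \dots,\ \sigma_{k-1,k}\circ\cdots\circ\sigma_{12}(f^{(k)}),\ \dots\big)$$ is again a circular net with a family of spherical curvature lines, the $k$-th curve lying on the sphere $\bar{\mathfrak{s}}_k$ (with $\bar{\mathfrak{s}}_1:=\mathfrak{s}_1$).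
   Context: Light cone model: $\mathbb{R}^{4,2}$ is $\mathbb{R}^6$ with a symmetric bilinear form $\langle\cdot,\cdot\rangle$ of signature $(4,2)$; $\mathcal{L}=\{v:\langle v,v\rangle=0\}$ and $\mathbb{P}(\mathcal{L})$ is its projectivization. A fixed vector $\mathfrak{p}$ (point sphere complex) with $\langle\mathfrak{p},\mathfrak{p}\rangle=-1$ is given; elements $v\in\mathbb{P}(\mathcal{L})$ with $\langle\mathfrak{v},\mathfrak{p}\rangle=0$ represent points of $\mathbb{R}^3\cup\{\infty\}$, the others represent oriented spheres (planes count as spheres). A point lies on a sphere iff their representatives are orthogonal. Fraktur letters denote representatives (homogeneous coordinates). For $\mathfrak{a}$ with $\langle\mathfrak{a},\mathfrak{a}\rangle\neq0$ the inversion in $\mathfrak{a}$ is $\sigma_a(x)=x-\frac{2\langle x,\mathfrak{a}\rangle}{\langle\mathfrak{a},\mathfrak{a}\rangle}\mathfrak{a}$; it is an M-inversion if $\langle\mathfrak{a},\mathfrak{p}\rangle=0$ (M-inversions map points to points and generate the Möbius transformations). Four points are concircular iff their representatives are linearly dependent. A discrete curve is a map $f:\mathcal{V}\to\mathbb{P}(\mathcal{L})$ into points, $\mathcal{V}$ a set of consecutive integers, edges $(ij)$ joining consecutive vertices. Two discrete curves $f,g$ on the same $\mathcal{V}$ form a Ribaucour pair if for every edge $(ij)$ the points $f_i,f_j,g_j,g_i$ are concircular. A circular net with a family of spherical curvature lines is a sequence $(f^{(1)},f^{(2)},\dots)$ of discrete curves on a common vertex set such that consecutive curves form Ribaucour pairs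 and each $f^{(j)}$ lies on a sphere $s_j$ (i.e. $\langle\mathfrak{f}^{(j)}_t,\mathfrak{s}_j\rangle=0$ for all $t$); it is non-degenerate if consecutive curves lie on distinct spheres. The deformation $F\mapsto\tilde F$ is called a lifted-folding and the $\sigma_{j,j+1}$ folding inversions. *)

theory Defs
  imports "HOL-Analysis.Analysis"
begin

text \<open>Every symmetric bilinear form
  of signature (4,2) on R^6 is isometric to this one.\<close>

definition lor :: "real^6 \<Rightarrow> real^6 \<Rightarrow> real" where
  "lor x y = (\<Sum>i\<in>UNIV. (if i = (4::6) \<or> i = 5 then -1 else 1) * (x$i) * (y$i))"

text \<open>Representatives of elements of P(L).\<close>
definition in_cone :: "real^6 \<Rightarrow> bool" where
  "in_cone v \<longleftrightarrow> v \<noteq> 0 \<and> lor v v = 0"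

text \<open>v represents a point of R^3 \<union> {\<infinity>}.\<close>
definition is_point :: "real^6 \<Rightarrow> real^6 \<Rightarrow> bool" where
  "is_point p v \<longleftrightarrow> in_cone v \<and> lor v p = 0"

text \<open>v represents an oriented sphere (or plane).\<close>
definition is_sphere :: "real^6 \<Rightarrow> real^6 \<Rightarrow> bool" where
  "is_sphere p v \<longleftrightarrow> in_cone v \<and> lor v p \<noteq> 0"

definition proj_eq :: "real^6 \<Rightarrow> real^6 \<Rightarrow> bool" where
  "proj_eq a b \<longleftrightarrow> (\<exists>c. c \<noteq> 0 \<and> b = c *\<^sub>R a)"

text \<open>Inversion in a (meaningful when lor a a \<noteq> 0).\<close>
definition inversion :: "real^6 \<Rightarrow> real^6 \<Rightarrow> real^6" where
  "inversion a x = x - (2 * lor x a / lor a a) *\<^sub>R a"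

definition lin_dep4 :: "real^6 \<Rightarrow> real^6 \<Rightarrow> real^6 \<Rightarrow> real^6 \<Rightarrow> bool" where
  "lin_dep4 a b c d \<longleftrightarrow> (\<exists>c1 c2 c3 c4. (c1, c2, c3, c4) \<noteq> (0, 0, 0, 0) \<and>
     c1 *\<^sub>R a + c2 *\<^sub>R b + c3 *\<^sub>R c + c4 *\<^sub>R d = 0)"

definition consecutive_ints :: "int set \<Rightarrow> bool" where
  "consecutive_ints V \<longleftrightarrow> (\<forall>a b c. a \<in> V \<and> b \<in> V \<and> a \<le> c \<and> c \<le> b \<longrightarrow> c \<in> V)"

definition curve_index_set :: "nat set \<Rightarrow> bool" where
  "curve_index_set J \<longleftrightarrow> 1 \<in> J \<and> 0 \<notin> J \<and> (\<forall>j k. 1 \<le> j \<and> j \<le> k \<and> k \<in> J \<longrightarrow> j \<in> J)"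

definition discrete_curve :: "real^6 \<Rightarrow> int set \<Rightarrow> (int \<Rightarrow> real^6) \<Rightarrow> bool" where
  "discrete_curve p V f \<longleftrightarrow> (\<forall>t\<in>V. is_point p (f t))"

definition ribaucour_pair :: "int set \<Rightarrow> (int \<Rightarrow> real^6) \<Rightarrow> (int \<Rightarrow> real^6) \<Rightarrow> bool" where
  "ribaucour_pair V f g \<longleftrightarrow>
     (\<forall>i. i \<in> V \<and> i + 1 \<in> V \<longrightarrow> lin_dep4 (f i) (f (i + 1)) (g (i + 1)) (g i))"

definition circ_net_sph :: "real^6 \<Rightarrow> nat set \<Rightarrow> int set \<Rightarrow> (nat \<Rightarrow> int \<Rightarrow> real^6)
    \<Rightarrow> (nat \<Rightarrow> real^6) \<Rightarrow> bool" where
  "circ_net_sph p J V f s \<longleftrightarrow>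
     (\<forall>j\<in>J. discrete_curve p V (f j) \<and> is_sphere p (s j) \<and> (\<forall>t\<in>V. lor (f j t) (s j) = 0)) \<and>
     (\<forall>j. j \<in> J \<and> Suc j \<in> J \<longrightarrow> ribaucour_pair V (f j) (f (Suc j)))"

definition nondegenerate :: "nat set \<Rightarrow> (nat \<Rightarrow> real^6) \<Rightarrow> bool" where
  "nondegenerate J s \<longleftrightarrow> (\<forall>j. j \<in> J \<and> Suc j \<in> J \<longrightarrow> \<not> proj_eq (s j) (s (Suc j)))"

text \<open>Folding maps: Phi p s lam j = sigma_{j-1,j} o ... o sigma_{12} (Phi _ _ _ 1 = id),
  lam j = lambda_{j,j+1}, and fold_normal p s lam j = n_{j,j+1}.\<close>
fun Phi :: "real^6 \<Rightarrow> (nat \<Rightarrow> real^6) \<Rightarrow> (nat \<Rightarrow> real) \<Rightarrow> nat \<Rightarrow> real^6 \<Rightarrow> real^6" where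
  "Phi p s lam 0 = id"
| "Phi p s lam (Suc 0) = id"
| "Phi p s lam (Suc (Suc j)) =
     inversion (Phi p s lam (Suc j) (s (Suc j)) + lam (Suc j) *\<^sub>R Phi p s lam (Suc j) (s (Suc (Suc j)))
                 - (1 + lam (Suc j)) *\<^sub>R p)
     \<circ> Phi p s lam (Suc j)"

definition fold_normal :: "real^6 \<Rightarrow> (nat \<Rightarrow> real^6) \<Rightarrow> (nat \<Rightarrow> real) \<Rightarrow> nat \<Rightarrow> real^6" where
  "fold_normal p s lam j = Phi p s lam j (s j) + lam j *\<^sub>R Phi p s lam j (s (Suc j)) - (1 + lam j) *\<^sub>R p"

lemma Phi_Suc: "j \<ge> 1 \<Longrightarrow> Phi p s lam (Suc j) = inversion (fold_normal p s lam j) \<circ> Phi p s lam j"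
  by (cases j) (auto simp: fold_normal_def)

end

(* Each folding normal n_{j,j+1} is orthogonal to p because of the normalisation
   <s_j, p> = -1, so every folding inversion, and hence every Phi_k, is a Moebius
   transformation: in the light cone model, a linear isometry of R^{4,2} fixing p. Such maps
   send points to points, spheres to spheres and preserve incidence, so the k-th folded curve
   lies on the sphere Phi_k(s_k).
   For the Ribaucour condition, a linear dependency among f_i, f_{i+1}, g_{i+1}, g_i on an
   edge yields a vector u in the span of f_i, f_{i+1} and in the span of g_i, g_{i+1}. It is
   orthogonal to s_j, s_{j+1} and p, so Phi_j(u) is orthogonal to n_{j,j+1} and fixed by
   sigma_{j,j+1}; applying Phi_j to the f-side and Phi_{j+1} = sigma_{j,j+1} o Phi_j to the
   g-side therefore keeps the four points dependent. *)

theory Submission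
  imports Defs
begin

lemma lor_commute: "lor x y = lor y x"
  by (simp add: lor_def algebra_simps)

lemma linear_lor_left: "linear (\<lambda>x. lor x z)"
  by (rule linearI)
     (simp_all add: lor_def sum.distrib[symmetric] sum_distrib_left algebra_simps)

lemma linear_lor_right: "linear (lor z)"
proof -
  have "lor z = (\<lambda>x. lor x z)"
    by (simp add: fun_eq_iff lor_commute)
  then show ?thesis
    using linear_lor_left by simp
qed

lemmas lor_left_simps =
  linear_add[OF linear_lor_left] linear_diff[OF linear_lor_left]
  linear_scale[OF linear_lor_left] linear_neg[OF linear_lor_left] linear_0[OF linear_lor_left]

lemmas lor_right_simps =
  linear_add[OF linear_lor_right] linear_diff[OF linear_lor_right]
  linear_scale[OF linear_lor_right] linear_neg[OF linear_lor_right] linear_0[OF linear_lor_right]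

lemmas lor_simps = lor_left_simps lor_right_simps

lemma lor_nondegenerate:
  assumes "\<And>y. lor x y = 0"
  shows "x = 0"
proof -
  define y :: "real^6" where "y = (\<chi> i. (if i = 4 \<or> i = 5 then -1 else 1) * x $ i)"
  have "x \<bullet> x = lor x y"
    by (auto simp: y_def lor_def inner_vec_def intro: sum.cong)
  then show ?thesis
    using assms by simp
qed

lemma lor_orthogonal_span:
  assumes "\<And>x. x \<in> B \<Longrightarrow> lor x a = 0" and "v \<in> span B"
  shows "lor v a = 0"
  using linear_eq_0_on_span[OF linear_lor_left] assms by blast

definition moebius_map :: "real^6 \<Rightarrow> (real^6 \<Rightarrow> real^6) \<Rightarrow> bool" where
  "moebius_map p T \<longleftrightarrow> linear T \<and> (\<forall>x y. lor (T x) (T y) = lor x y) \<and> T p = p"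

lemma moebius_map_lor: "moebius_map p T \<Longrightarrow> lor (T x) (T y) = lor x y"
  by (simp add: moebius_map_def)

lemma moebius_map_lor_fixed: "moebius_map p T \<Longrightarrow> lor (T x) p = lor x p"
  by (metis moebius_map_def)

lemma moebius_map_id: "moebius_map p id"
  by (simp add: moebius_map_def linear_id)

lemma moebius_map_comp:
  "moebius_map p S \<Longrightarrow> moebius_map p T \<Longrightarrow> moebius_map p (S \<circ> T)"
  by (simp add: moebius_map_def linear_compose)

lemma linear_inversion: "linear (inversion a)"
  by (rule linearI) (simp_all add: inversion_def lor_simps add_divide_distrib algebra_simps)

lemma inversion_orthogonal: "lor x a = 0 \<Longrightarrow> inversion a x = x"
  by (simp add: inversion_def)

lemma lor_inversion:
  assumes "lor a a \<noteq> 0"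
  shows "lor (inversion a x) (inversion a y) = lor x y"
proof -
  define c where "c z = 2 * lor z a / lor a a" for z
  have "lor (inversion a x) (inversion a y) =
      lor x y - c y * lor x a - c x * lor y a + c x * c y * lor a a"
    by (simp add: inversion_def c_def lor_simps lor_commute[of a y] algebra_simps)
  also have "\<dots> = lor x y"
    using assms by (simp add: c_def field_simps)
  finally show ?thesis .
qed

lemma moebius_map_inversion:
  "lor a a \<noteq> 0 \<Longrightarrow> lor a p = 0 \<Longrightarrow> moebius_map p (inversion a)"
  by (simp add: moebius_map_def linear_inversion lor_inversion inversion_orthogonal lor_commute[of a p])

lemma moebius_map_nonzero:
  assumes "moebius_map p T" and "x \<noteq> 0"
  shows "T x \<noteq> 0"
proof
  assume "T x = 0"
  then have "lor x y = 0" for y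
    using moebius_map_lor[OF assms(1), of x y] by (simp add: lor_left_simps)
  then show False
    using assms(2) lor_nondegenerate by blast
qed

lemma moebius_map_in_cone: "moebius_map p T \<Longrightarrow> in_cone v \<Longrightarrow> in_cone (T v)"
  using moebius_map_nonzero unfolding in_cone_def moebius_map_def by metis

lemma moebius_map_is_point: "moebius_map p T \<Longrightarrow> is_point p v \<Longrightarrow> is_point p (T v)"
  using moebius_map_in_cone unfolding is_point_def moebius_map_def by metis

lemma moebius_map_is_sphere: "moebius_map p T \<Longrightarrow> is_sphere p v \<Longrightarrow> is_sphere p (T v)"
  using moebius_map_in_cone unfolding is_sphere_def moebius_map_def by metis

lemma lin_dep4_linear_image:
  assumes "linear T" and "lin_dep4 a b c d"
  shows "lin_dep4 (T a) (T b) (T c) (T d)"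
proof -
  obtain k1 k2 k3 k4 where nz: "(k1, k2, k3, k4) \<noteq> (0, 0, 0, 0)"
    and dep: "k1 *\<^sub>R a + k2 *\<^sub>R b + k3 *\<^sub>R c + k4 *\<^sub>R d = 0"
    using assms(2) unfolding lin_dep4_def by blast
  have "k1 *\<^sub>R T a + k2 *\<^sub>R T b + k3 *\<^sub>R T c + k4 *\<^sub>R T d = 0"
    using arg_cong[OF dep, of T] assms(1) by (simp add: linear_add linear_scale linear_0)
  with nz show ?thesis
    unfolding lin_dep4_def by blast
qed

lemma lin_dep4_fix_common:
  assumes "lin_dep4 a b c d" and "linear S"
    and common_fixed: "\<And>v. v \<in> span {a, b} \<Longrightarrow> v \<in> span {c, d} \<Longrightarrow> S v = v"
  shows "lin_dep4 a b (S c) (S d)"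
proof -
  obtain k1 k2 k3 k4 where nz: "(k1, k2, k3, k4) \<noteq> (0, 0, 0, 0)"
    and dep: "k1 *\<^sub>R a + k2 *\<^sub>R b + k3 *\<^sub>R c + k4 *\<^sub>R d = 0"
    using assms(1) unfolding lin_dep4_def by blast
  define u where "u = k1 *\<^sub>R a + k2 *\<^sub>R b"
  have cd: "k3 *\<^sub>R c + k4 *\<^sub>R d = - u"
    using dep unfolding u_def by (simp add: algebra_simps eq_neg_iff_add_eq_0)
  have "u \<in> span {a, b}"
    unfolding u_def by (intro span_add span_scale span_base) auto
  moreover have "- u \<in> span {c, d}"
    unfolding cd[symmetric] by (intro span_add span_scale span_base) auto
  ultimately have "S u = u"
    using common_fixed span_neg by fastforce
  then have "k3 *\<^sub>R S c + k4 *\<^sub>R S d = - u"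
    using arg_cong[OF cd, of S] assms(2) by (simp add: linear_add linear_scale linear_neg)
  then have "k1 *\<^sub>R a + k2 *\<^sub>R b + k3 *\<^sub>R S c + k4 *\<^sub>R S d = 0"
    unfolding u_def by (simp add: algebra_simps)
  with nz show ?thesis
    unfolding lin_dep4_def by blast
qed

lemma ribaucour_pair_fold:
  fixes \<mu> :: real
  assumes T: "moebius_map p T" and "ribaucour_pair V f g"
    and f: "\<And>t. t \<in> V \<Longrightarrow> lor (f t) a = 0 \<and> lor (f t) p = 0"
    and g: "\<And>t. t \<in> V \<Longrightarrow> lor (g t) b = 0"
  shows "ribaucour_pair V (T \<circ> f)
    (inversion (T a + \<mu> *\<^sub>R T b - (1 + \<mu>) *\<^sub>R p) \<circ> T \<circ> g)"
  unfolding ribaucour_pair_def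
proof (intro allI impI)
  fix i assume i: "i \<in> V \<and> i + 1 \<in> V"
  let ?n = "T a + \<mu> *\<^sub>R T b - (1 + \<mu>) *\<^sub>R p"
  have "linear T"
    using T by (simp add: moebius_map_def)
  moreover have "lin_dep4 (f i) (f (i + 1)) (g (i + 1)) (g i)"
    using assms(2) i unfolding ribaucour_pair_def by blast
  ultimately have dep: "lin_dep4 (T (f i)) (T (f (i + 1))) (T (g (i + 1))) (T (g i))"
    by (rule lin_dep4_linear_image)
  have "inversion ?n v = v"
    if "v \<in> span {T (f i), T (f (i + 1))}" "v \<in> span {T (g (i + 1)), T (g i)}" for v
  proof (rule inversion_orthogonal)
    have "lor v (T a) = 0"
      using that(1) by (rule lor_orthogonal_span[rotated]) (use f i moebius_map_lor[OF T] in auto)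
    moreover have "lor v p = 0"
      using that(1) by (rule lor_orthogonal_span[rotated]) (use f i moebius_map_lor_fixed[OF T] in auto)
    moreover have "lor v (T b) = 0"
      using that(2) by (rule lor_orthogonal_span[rotated]) (use g i moebius_map_lor[OF T] in auto)
    ultimately show "lor v ?n = 0"
      by (simp add: lor_right_simps)
  qed
  then have "lin_dep4 (T (f i)) (T (f (i + 1))) (inversion ?n (T (g (i + 1)))) (inversion ?n (T (g i)))"
    by (rule lin_dep4_fix_common[OF dep linear_inversion])
  then show "lin_dep4 ((T \<circ> f) i) ((T \<circ> f) (i + 1))
      ((inversion ?n \<circ> T \<circ> g) (i + 1)) ((inversion ?n \<circ> T \<circ> g) i)"
    by simp
qed

lemma lor_folding_normal_point_sphere_complex:
  assumes "moebius_map p T" and "lor p p = -1" and "lor a p = -1" and "lor b p = -1"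
  shows "lor (T a + \<mu> *\<^sub>R T b - (1 + \<mu>) *\<^sub>R p) p = 0"
  using assms by (simp add: lor_left_simps moebius_map_lor_fixed algebra_simps)

lemma moebius_map_Phi:
  assumes "lor p p = -1" and "1 \<le> k"
    and "\<And>j. 1 \<le> j \<Longrightarrow> j < k \<Longrightarrow> lor (fold_normal p s lam j) (fold_normal p s lam j) \<noteq> 0
           \<and> lor (s j) p = -1 \<and> lor (s (Suc j)) p = -1"
  shows "moebius_map p (Phi p s lam k)"
  using assms(2,3)
proof (induction k rule: dec_induct)
  case base
  show ?case
    by (simp only: One_nat_def Phi.simps moebius_map_id)
next
  case (step j)
  then have "lor (fold_normal p s lam j) p = 0"
    using assms(1) by (simp add: fold_normal_def lor_folding_normal_point_sphere_complex)
  moreover have "lor (fold_normal p s lam j) (fold_normal p s lam j) \<noteq> 0"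
    using step by simp
  ultimately have "moebius_map p (inversion (fold_normal p s lam j))"
    by (rule moebius_map_inversion[rotated])
  moreover have "moebius_map p (Phi p s lam j)"
    using step.IH step.prems by simp
  ultimately show ?case
    unfolding Phi_Suc[OF step.hyps(1)] by (rule moebius_map_comp)
qed

theorem theorem2p7:
  fixes p :: "real^6" and J :: "nat set" and V :: "int set"
    and f :: "nat \<Rightarrow> int \<Rightarrow> real^6" and s :: "nat \<Rightarrow> real^6" and lam :: "nat \<Rightarrow> real"
  assumes "lor p p = -1"
    and "curve_index_set J" and "consecutive_ints V"
    and "circ_net_sph p J V f s"
    and "nondegenerate J s"
    and "\<forall>j\<in>J. \<forall>k\<in>J. j \<noteq> k \<longrightarrow> \<not> proj_eq (s j) (s k)"
    and "\<forall>j\<in>J. lor (s j) p = -1"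
    and "\<forall>j. j \<in> J \<and> Suc j \<in> J \<longrightarrow> lor (fold_normal p s lam j) (fold_normal p s lam j) \<noteq> 0"
  shows "circ_net_sph p J V (\<lambda>k t. Phi p s lam k (f k t)) (\<lambda>k. Phi p s lam k (s k))"
proof -
  have index_pos: "1 \<le> k" and index_closed: "\<And>j. 1 \<le> j \<Longrightarrow> j \<le> k \<Longrightarrow> j \<in> J" if "k \<in> J" for k
    using assms(2) that unfolding curve_index_set_def by (metis less_one not_le, blast)
  have moebius: "moebius_map p (Phi p s lam k)" if "k \<in> J" for k
    using assms(1,7,8) index_closed[OF that] by (intro moebius_map_Phi index_pos[OF that]) auto
  have net: "\<forall>t\<in>V. is_point p (f j t) \<and> lor (f j t) (s j) = 0" "is_sphere p (s j)"
    and pair: "Suc j \<in> J \<Longrightarrow> ribaucour_pair V (f j) (f (Suc j))" if "j \<in> J" for j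
    using assms(4) that by (auto simp: circ_net_sph_def discrete_curve_def)
  have "ribaucour_pair V (\<lambda>t. Phi p s lam j (f j t)) (\<lambda>t. Phi p s lam (Suc j) (f (Suc j) t))"
    if "j \<in> J" "Suc j \<in> J" for j
    using ribaucour_pair_fold[OF moebius pair, where a = "s j" and b = "s (Suc j)" and \<mu> = "lam j"] net that
    by (simp add: Phi_Suc[OF index_pos] fold_normal_def is_point_def comp_def)
  with net moebius show ?thesis
    by (auto simp: circ_net_sph_def discrete_curve_def moebius_map_is_point moebius_map_is_sphere
        moebius_map_lor[OF moebius])
qed

end
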